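(* There is a positive constant $C$ such that for every real number $\lambda$ and every real $x\ge0$, $$\sum_{k=0}^\infty\frac{|H_k(\lambda)|}{k!}x^k\le C(1+x)^{1/2}\exp\Big(x^2+\frac{\lambda^2}{2}\Big),$$ where $H_k$ denotes the $k$-th Hermite polynomial.
   Context: The Hermite polynomials are $H_k(\lambda)=(-1)^ke^{\lambda^2}\frac{d^k}{d\lambda^k}\big(e^{-\lambda^2}\big)$, $k=0,1,2,\dots$; equivalently $\sum_{k\ge0}\frac{H_k(\lambda)}{k!}x^k=\exp(2\lambda x-x^2)$. *)

theory Defs
  imports "HOL-Analysis.Analysis"
begin

definition hermite :: "nat \<Rightarrow> real \<Rightarrow> real" where
  "hermite k l = (-1) ^ k * exp (l\<^sup>2) * (deriv ^^ k) (\<lambda>t. exp (- t\<^sup>2)) l"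

end

(*
  H_k(lambda) / k! is the k-th Taylor coefficient of exp(2 lambda z - z^2) at 0, so by Cauchy's
  estimate on the circle |z| = r it is at most r^-k times the mean over the circle of
    |exp(2 lambda z - z^2)| = exp(r^2 + lambda^2/2 - 2 r^2 (cos theta - lambda/(2r))^2).
  The Gaussian factor is concentrated near the (at most two) angles where cos theta is closest to
  lambda/(2r); cos is at worst quadratic there, so the mean is O(r^-1/2).  Taking r = sqrt(k/2)
  and a Stirling bound gives |H_k(lambda)| x^k / k! <= 16 e^(lambda^2/2) sqrt((2x^2)^k / k!), and
  by Cauchy-Schwarz against Poisson weights sum_k sqrt(m^k / k!) = O((1 + m)^(1/4) e^(m/2)).
  With m = 2x^2 this is the claimed bound.
*)

theory Submission
  imports Defs "HOL-Complex_Analysis.Complex_Analysis" "HOL-Computational_Algebra.Polynomial"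
begin

section \<open>Hermite polynomials\<close>

fun hermite_poly :: "nat \<Rightarrow> 'a::idom poly" where
  "hermite_poly 0 = 1"
| "hermite_poly (Suc k) = smult 2 (pCons 0 (hermite_poly k)) - pderiv (hermite_poly k)"

lemma coeff_hermite_poly_Suc:
  "coeff (hermite_poly (Suc k)) i =
     2 * (case i of 0 \<Rightarrow> 0 | Suc j \<Rightarrow> coeff (hermite_poly k) j) - of_nat (Suc i) * coeff (hermite_poly k) (Suc i)"
  by (simp add: coeff_pderiv coeff_pCons split: nat.split)

lemma coeff_hermite_poly_eq_0: "odd (i + k) \<Longrightarrow> coeff (hermite_poly k) i = 0"
proof (induction k arbitrary: i)
  case 0
  then show ?case by (cases i) (auto simp: coeff_1)
next
  case (Suc k)
  then show ?case by (cases i) (simp_all add: coeff_pderiv)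
qed

lemma poly_hermite_poly_minus:
  "poly (hermite_poly k) (- x) = (-1) ^ k * poly (hermite_poly k) (x :: 'a::idom)"
proof -
  have "coeff (hermite_poly k) i * (- x) ^ i = (-1) ^ k * (coeff (hermite_poly k) i * x ^ i)" for i
    by (cases "even (i + k)")
       (auto simp: coeff_hermite_poly_eq_0 power_minus[of x] power_add elim!: evenE oddE)
  then show ?thesis
    unfolding poly_altdef sum_distrib_left by (intro sum.cong) auto
qed

lemma map_poly_of_real_hermite_poly:
  "map_poly of_real (hermite_poly k) = (hermite_poly k :: 'a::{real_algebra_1,idom} poly)"
proof (induction k)
  case (Suc k)
  have "of_real (coeff (hermite_poly k) i) = (coeff (hermite_poly k) i :: 'a)" for i
    using arg_cong[OF Suc.IH, of "\<lambda>p. coeff p i"] by (simp only: coeff_map_poly of_real_0)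
  then show ?case
    by (intro poly_eqI) (simp add: coeff_map_poly coeff_hermite_poly_Suc split: nat.split del: hermite_poly.simps)
qed simp

lemma poly_map_poly_of_real:
  "poly (map_poly of_real p) (of_real x) = (of_real (poly p x) :: 'a::{real_algebra_1,idom})"
  by (induction p) (auto simp: map_poly_pCons)

lemma poly_hermite_poly_of_real:
  "poly (hermite_poly k) (of_real x) = (of_real (poly (hermite_poly k) x) :: 'a::{real_algebra_1,idom})"
  using poly_map_poly_of_real[of "hermite_poly k" x] by (simp only: map_poly_of_real_hermite_poly)

lemma higher_deriv_hermite_generating:
  fixes c :: "'a::{real_normed_field,banach}"
  shows "(deriv ^^ k) (\<lambda>z. exp (2 * c * z - z\<^sup>2)) = (\<lambda>z. poly (hermite_poly k) (c - z) * exp (2 * c * z - z\<^sup>2))"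
proof (induction k)
  case 0
  then show ?case by simp
next
  case (Suc k)
  have "((\<lambda>z. poly (hermite_poly k) (c - z) * exp (2 * c * z - z\<^sup>2)) has_field_derivative
          poly (hermite_poly (Suc k)) (c - z) * exp (2 * c * z - z\<^sup>2)) (at z)" for z
    by (auto intro!: derivative_eq_intros simp: power2_eq_square algebra_simps)
  then show ?case
    using Suc by (auto intro!: DERIV_imp_deriv)
qed

lemma hermite_eq_poly: "hermite k l = poly (hermite_poly k) l"
proof -
  have "(deriv ^^ k) (\<lambda>t. exp (- t\<^sup>2)) l = poly (hermite_poly k) (- l) * exp (- l\<^sup>2)"
    using higher_deriv_hermite_generating[where c = "0::real"] by simp
  moreover have "(-1::real) ^ k * (-1) ^ k = 1"
    by (simp flip: power_mult_distrib)
  ultimately show ?thesis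
    by (simp add: hermite_def poly_hermite_poly_minus exp_minus_inverse mult_ac)
qed

lemma higher_deriv_hermite_generating_0:
  "(deriv ^^ k) (\<lambda>z. exp (2 * complex_of_real l * z - z\<^sup>2)) 0 = of_real (hermite k l)"
proof -
  have "(deriv ^^ k) (\<lambda>z. exp (2 * complex_of_real l * z - z\<^sup>2)) 0 = poly (hermite_poly k) (of_real l)"
    by (simp add: higher_deriv_hermite_generating)
  also have "\<dots> = of_real (hermite k l)"
    by (simp only: poly_hermite_poly_of_real hermite_eq_poly)
  finally show ?thesis .
qed

section \<open>Cauchy's estimate for the Hermite coefficients\<close>

lemma norm_higher_deriv_le_integral_circlepath:
  assumes contf: "continuous_on (cball w r) f" and holf: "f holomorphic_on ball w r" and r: "r > 0"
  shows "norm ((deriv ^^ k) f w) \<le> fact k / r ^ k * integral {0..1} (\<lambda>t. norm (f (circlepath w r t)))"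
proof -
  define I where "I = 2 * pi * \<i> / fact k * (deriv ^^ k) f w"
  define h where "h = (\<lambda>t. f (circlepath w r t) / (circlepath w r t - w) ^ Suc k
                            * vector_derivative (circlepath w r) (at t within {0..1}))"
  have "((\<lambda>u. f u / (u - w) ^ Suc k) has_contour_integral I) (circlepath w r)"
    unfolding I_def using contf holf r by (intro Cauchy_has_contour_integral_higher_derivative_circlepath) auto
  then have h: "(h has_integral I) {0..1}"
    by (simp add: has_contour_integral_def h_def)
  have contf_circle: "continuous_on {0..1} (\<lambda>t. f (circlepath w r t))"
  proof (rule continuous_on_compose2[OF contf])
    show "continuous_on {0..1} (circlepath w r)"
      using path_circlepath unfolding path_def .
    show "circlepath w r ` {0..1} \<subseteq> cball w r"
      using r path_image_circlepath[of w r] by (auto simp: path_image_def)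
  qed
  have norm_h: "norm (h t) = 2 * pi / r ^ k * norm (f (circlepath w r t))" if "t \<in> {0..1}" for t
  proof -
    have "norm (circlepath w r t - w) = r" "norm (exp (2 * of_real pi * \<i> * of_real t)) = 1"
      using r by (simp_all add: circlepath norm_mult)
    then show ?thesis
      using that r by (simp add: h_def vector_derivative_circlepath01 norm_mult norm_divide norm_power)
  qed
  have "norm (integral {0..1} h) \<le> integral {0..1} (\<lambda>t. 2 * pi / r ^ k * norm (f (circlepath w r t)))"
    by (intro integral_norm_bound_integral has_integral_integrable[OF h] integrable_continuous_interval
        continuous_intros contf_circle) (simp add: norm_h)
  then show ?thesis
    using r integral_unique[OF h] by (simp add: I_def norm_mult norm_divide field_simps)
qed

lemma sin_ge_one_third:
  fixes x :: real
  assumes "0 \<le> x" "x \<le> pi / 2"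
  shows "x / 3 \<le> sin x"
proof (cases "x \<le> pi / 3")
  case True
  have "(\<lambda>y. sin y - y / 3) 0 \<le> (\<lambda>y. sin y - y / 3) x"
  proof (rule DERIV_nonneg_imp_nondecreasing[OF assms(1)])
    fix y assume y: "0 \<le> y" "y \<le> x"
    have "cos (pi / 3) \<le> cos y"
      using y True by (intro cos_monotone_0_pi_le) auto
    then show "\<exists>d. ((\<lambda>y. sin y - y / 3) has_real_derivative d) (at y) \<and> d \<ge> 0"
      by (intro exI[of _ "cos y - 1 / 3"]) (auto intro!: derivative_eq_intros simp: cos_60)
  qed
  then show ?thesis by simp
next
  case False
  have "sin (pi / 3) \<le> sin x"
    using False assms by (intro sin_monotone_2pi_le) auto
  moreover have "4 / 3 \<le> sqrt (3::real)"
    by (rule real_le_rsqrt) (simp add: power2_eq_square)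
  ultimately show ?thesis
    using assms pi_less_4 by (simp add: sin_60)
qed

lemma sq_diff_le_abs_cos_diff:
  fixes \<phi> \<psi> :: real
  assumes "0 \<le> \<phi>" "\<phi> \<le> pi" "0 \<le> \<psi>" "\<psi> \<le> pi"
  shows "(\<phi> - \<psi>)\<^sup>2 / 18 \<le> \<bar>cos \<phi> - cos \<psi>\<bar>"
proof -
  define d where "d = \<bar>\<phi> - \<psi>\<bar>"
  have d: "0 \<le> d" "d \<le> pi"
    using assms by (auto simp: d_def)
  have mid: "sin (d / 2) \<le> sin ((\<phi> + \<psi>) / 2)"
  proof (cases "(\<phi> + \<psi>) / 2 \<le> pi / 2")
    case True
    then show ?thesis
      using d assms by (intro sin_monotone_2pi_le) (auto simp: d_def)
  next
    case False
    then have "sin (d / 2) \<le> sin (pi - (\<phi> + \<psi>) / 2)"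
      using d assms by (intro sin_monotone_2pi_le) (auto simp: d_def abs_if field_simps)
    then show ?thesis by simp
  qed
  have half: "d / 6 \<le> sin (d / 2)"
    using sin_ge_one_third[of "d / 2"] d by simp
  have "\<bar>sin ((\<psi> - \<phi>) / 2)\<bar> = sin (d / 2)"
  proof -
    have "(\<psi> - \<phi>) / 2 = d / 2 \<or> (\<psi> - \<phi>) / 2 = - (d / 2)"
      by (auto simp: d_def abs_if)
    then have "\<bar>sin ((\<psi> - \<phi>) / 2)\<bar> = \<bar>sin (d / 2)\<bar>"
      by (metis abs_minus_cancel sin_minus)
    then show ?thesis
      using d sin_ge_zero[of "d / 2"] by simp
  qed
  moreover have "0 \<le> sin ((\<phi> + \<psi>) / 2)"
    using assms by (intro sin_ge_zero) auto
  moreover have "d / 6 * (d / 6) \<le> sin ((\<phi> + \<psi>) / 2) * sin (d / 2)"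
    using mid half d \<open>0 \<le> sin ((\<phi> + \<psi>) / 2)\<close> by (intro mult_mono) auto
  ultimately have "2 * (d / 6) * (d / 6) \<le> 2 * \<bar>sin ((\<phi> + \<psi>) / 2)\<bar> * \<bar>sin ((\<psi> - \<phi>) / 2)\<bar>"
    by simp
  also have "\<dots> = \<bar>cos \<phi> - cos \<psi>\<bar>"
    by (simp add: cos_diff_cos abs_mult)
  finally have "2 * (d / 6) * (d / 6) \<le> \<bar>cos \<phi> - cos \<psi>\<bar>" .
  moreover have "(\<phi> - \<psi>)\<^sup>2 = d * d"
    by (simp add: d_def power2_eq_square abs_mult_self_eq)
  ultimately show ?thesis by simp
qed

(* The angle in [0, pi] whose cosine is closest to c. *)
definition nearest_angle :: "real \<Rightarrow> real" where
  "nearest_angle c = arccos (max (-1) (min 1 c))"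

lemma nearest_angle_bounds: "0 \<le> nearest_angle c" "nearest_angle c \<le> pi"
  by (simp_all add: nearest_angle_def arccos_lbound arccos_ubound)

lemma sq_diff_nearest_angle_le_abs_cos_diff:
  fixes \<phi> c :: real
  assumes "0 \<le> \<phi>" "\<phi> \<le> pi"
  shows "(\<phi> - nearest_angle c)\<^sup>2 / 18 \<le> \<bar>cos \<phi> - c\<bar>"
proof -
  have "cos (nearest_angle c) = max (-1) (min 1 c)"
    unfolding nearest_angle_def by (intro cos_arccos) auto
  then have "\<bar>cos \<phi> - cos (nearest_angle c)\<bar> \<le> \<bar>cos \<phi> - c\<bar>"
    using cos_ge_minus_one[of \<phi>] cos_le_one[of \<phi>] by linarith
  moreover have "(\<phi> - nearest_angle c)\<^sup>2 / 18 \<le> \<bar>cos \<phi> - cos (nearest_angle c)\<bar>"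
    using assms nearest_angle_bounds by (intro sq_diff_le_abs_cos_diff)
  ultimately show ?thesis
    by linarith
qed

lemma exp_neg_square_le:
  fixes v :: real
  assumes "0 \<le> v"
  shows "exp (- v\<^sup>2) \<le> 2 / (1 + v)"
proof -
  have "1 + v \<le> 2 * (1 + v\<^sup>2)"
    using zero_le_square[of v] zero_le_square[of "v - 1/4"] by (simp add: power2_eq_square algebra_simps)
  also have "\<dots> \<le> 2 * exp (v\<^sup>2)"
    by (intro mult_left_mono exp_ge_add_one_self) simp
  finally show ?thesis
    using assms by (simp add: exp_minus field_simps)
qed

lemma exp_neg_sq_cos_diff_le:
  fixes r \<phi> c :: real
  assumes "r > 0" "0 \<le> \<phi>" "\<phi> \<le> pi"
  shows "exp (- (2 * r\<^sup>2 * (cos \<phi> - c)\<^sup>2))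
           \<le> 2 / (1 + (sqrt r / 4 * (\<phi> - nearest_angle c))\<^sup>2)"
proof -
  define u where "u = (\<phi> - nearest_angle c)\<^sup>2"
  have "u / 18 \<le> \<bar>cos \<phi> - c\<bar>"
    unfolding u_def using assms by (intro sq_diff_nearest_angle_le_abs_cos_diff)
  then have "(u / 18)\<^sup>2 \<le> (cos \<phi> - c)\<^sup>2"
    using power_mono[of "u / 18" "\<bar>cos \<phi> - c\<bar>" 2] by (simp add: u_def)
  then have "r\<^sup>2 * (u / 18)\<^sup>2 \<le> r\<^sup>2 * (cos \<phi> - c)\<^sup>2"
    by (rule mult_left_mono) simp
  \<comment> \<open>Any constant above 18 / sqrt 2 would do in place of 16.\<close>
  then have "(r * u / 16)\<^sup>2 \<le> 81 / 64 * (r\<^sup>2 * (cos \<phi> - c)\<^sup>2)"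
    by (simp add: power_mult_distrib power_divide)
  also have "\<dots> \<le> 2 * r\<^sup>2 * (cos \<phi> - c)\<^sup>2"
    by simp
  finally have "exp (- (2 * r\<^sup>2 * (cos \<phi> - c)\<^sup>2)) \<le> exp (- (r * u / 16)\<^sup>2)"
    by simp
  also have "\<dots> \<le> 2 / (1 + r * u / 16)"
    using assms by (intro exp_neg_square_le) (simp add: u_def)
  finally show ?thesis
    using assms by (simp add: u_def power_mult_distrib power_divide)
qed

lemma exp_neg_sq_cos_diff_le_kernels:
  fixes r \<theta> c :: real
  assumes r: "r > 0" and \<theta>: "0 \<le> \<theta>" "\<theta> \<le> 2 * pi"
  shows "exp (- (2 * r\<^sup>2 * (cos \<theta> - c)\<^sup>2))
           \<le> 2 / (1 + (sqrt r / 4 * (\<theta> - nearest_angle c))\<^sup>2)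
             + 2 / (1 + (sqrt r / 4 * (2 * pi - \<theta> - nearest_angle c))\<^sup>2)"
proof (cases "\<theta> \<le> pi")
  case True
  then show ?thesis
    using exp_neg_sq_cos_diff_le[OF r \<theta>(1) True, of c]
    by (simp add: add_increasing2)
next
  case False
  have "cos \<theta> = cos (2 * pi - \<theta>)"
    by simp
  then show ?thesis
    using exp_neg_sq_cos_diff_le[OF r, of "2 * pi - \<theta>" c] \<theta> False
    by (simp add: add_increasing)
qed

lemma has_integral_inverse_one_plus_square:
  fixes \<alpha> \<beta> u v :: real
  assumes "\<alpha> \<noteq> 0" "u \<le> v"
  shows "((\<lambda>t. 1 / (1 + (\<alpha> * t + \<beta>)\<^sup>2)) has_integral
           (arctan (\<alpha> * v + \<beta>) - arctan (\<alpha> * u + \<beta>)) / \<alpha>) {u..v}"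
proof -
  have "((\<lambda>t. arctan (\<alpha> * t + \<beta>) / \<alpha>) has_real_derivative 1 / (1 + (\<alpha> * t + \<beta>)\<^sup>2)) (at t)" for t
  proof -
    have "((\<lambda>t. \<alpha> * t + \<beta>) has_real_derivative \<alpha>) (at t)"
      by (auto intro!: derivative_eq_intros)
    from DERIV_cdivide[OF DERIV_chain2[OF DERIV_arctan this], of \<alpha>] show ?thesis
      using assms(1) by (simp add: divide_inverse mult.assoc)
  qed
  then have "((\<lambda>t. 1 / (1 + (\<alpha> * t + \<beta>)\<^sup>2)) has_integral
               arctan (\<alpha> * v + \<beta>) / \<alpha> - arctan (\<alpha> * u + \<beta>) / \<alpha>) {u..v}"
    using assms(2) by (intro fundamental_theorem_of_calculus)
      (auto simp: has_real_derivative_iff_has_vector_derivative[symmetric] intro: has_field_derivative_at_within)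
  then show ?thesis
    by (simp add: diff_divide_distrib)
qed

lemma integral_inverse_one_plus_square_le:
  fixes \<alpha> \<beta> u v :: real
  assumes "\<alpha> \<noteq> 0" "u \<le> v"
  shows "integral {u..v} (\<lambda>t. 1 / (1 + (\<alpha> * t + \<beta>)\<^sup>2)) \<le> pi / \<bar>\<alpha>\<bar>"
proof -
  have "integral {u..v} (\<lambda>t. 1 / (1 + (\<alpha> * t + \<beta>)\<^sup>2))
          = (arctan (\<alpha> * v + \<beta>) - arctan (\<alpha> * u + \<beta>)) / \<alpha>"
    by (rule integral_unique[OF has_integral_inverse_one_plus_square[OF assms]])
  also have "\<dots> \<le> \<bar>arctan (\<alpha> * v + \<beta>) - arctan (\<alpha> * u + \<beta>)\<bar> / \<bar>\<alpha>\<bar>"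
    by (metis abs_divide abs_ge_self)
  also have "\<dots> \<le> pi / \<bar>\<alpha>\<bar>"
    using arctan_bounded[of "\<alpha> * v + \<beta>"] arctan_bounded[of "\<alpha> * u + \<beta>"]
    by (intro divide_right_mono) auto
  finally show ?thesis .
qed

lemma integral_exp_neg_sq_cos_le:
  fixes r c :: real
  assumes r: "r > 0"
  shows "integral {0..1} (\<lambda>t. exp (- (2 * r\<^sup>2 * (cos (2 * pi * t) - c)\<^sup>2))) \<le> 8 / sqrt r"
proof -
  define \<psi> where "\<psi> = nearest_angle c"
  define a where "a = sqrt r / 4"
  have a: "a > 0"
    using r by (simp add: a_def)
  define g where "g = (\<lambda>t. 2 * (1 / (1 + (2 * pi * a * t + - a * \<psi>)\<^sup>2))
                         + 2 * (1 / (1 + ((- 2 * pi * a) * t + a * (2 * pi - \<psi>))\<^sup>2)))"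
  have bound: "exp (- (2 * r\<^sup>2 * (cos (2 * pi * t) - c)\<^sup>2)) \<le> g t" if "t \<in> {0..1}" for t
    using exp_neg_sq_cos_diff_le_kernels[OF r, of "2 * pi * t" c] that
    by (simp add: g_def a_def \<psi>_def algebra_simps)
  have nonzero: "1 + y\<^sup>2 \<noteq> 0" for y :: real
    using zero_le_power2[of y] by linarith
  have "integral {0..1} (\<lambda>t. exp (- (2 * r\<^sup>2 * (cos (2 * pi * t) - c)\<^sup>2))) \<le> integral {0..1} g"
    using bound unfolding g_def
    by (intro integral_le integrable_continuous_interval continuous_intros) (simp_all add: nonzero)
  also have "\<dots> = 2 * integral {0..1} (\<lambda>t. 1 / (1 + (2 * pi * a * t + - a * \<psi>)\<^sup>2))
                   + 2 * integral {0..1} (\<lambda>t. 1 / (1 + ((- 2 * pi * a) * t + a * (2 * pi - \<psi>))\<^sup>2))"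
  proof -
    have integrable: "(\<lambda>t. 2 * (1 / (1 + (\<alpha> * t + \<beta>)\<^sup>2))) integrable_on {0..1}" for \<alpha> \<beta> :: real
      by (intro integrable_continuous_interval continuous_intros) (simp add: nonzero)
    show ?thesis
      unfolding g_def by (subst integral_add) (rule integrable | simp only: integral_mult_right)+
  qed
  also have "\<dots> \<le> 2 * (pi / \<bar>2 * pi * a\<bar>) + 2 * (pi / \<bar>- 2 * pi * a\<bar>)"
    using a by (intro add_mono mult_left_mono integral_inverse_one_plus_square_le) simp_all
  also have "\<dots> = 8 / sqrt r"
    using a by (simp add: a_def)
  finally show ?thesis .
qed

lemma norm_exp_hermite_generating_circlepath:
  fixes r l t :: real
  assumes "r > 0"
  shows "norm (exp (2 * complex_of_real l * circlepath 0 r t - (circlepath 0 r t)\<^sup>2))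
           = exp (r\<^sup>2 + l\<^sup>2 / 2) * exp (- (2 * r\<^sup>2 * (cos (2 * pi * t) - l / (2 * r))\<^sup>2))"
proof -
  have z: "circlepath 0 r t = complex_of_real r * cis (2 * pi * t)"
    by (simp add: circlepath cis_conv_exp mult_ac)
  have "2 * l * (r * cos \<theta>) - ((r * cos \<theta>)\<^sup>2 - (r * sin \<theta>)\<^sup>2)
          = r\<^sup>2 + l\<^sup>2 / 2 + - (2 * r\<^sup>2 * (cos \<theta> - l / (2 * r))\<^sup>2)" for \<theta>
    using assms by (simp add: sin_squared_eq power_mult_distrib) (simp add: power2_eq_square field_simps)
  then show ?thesis
    by (simp add: norm_exp_eq_Re z Re_power2 exp_add[symmetric])
qed

lemma abs_hermite_div_fact_le:
  fixes r l :: real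
  assumes r: "r > 0"
  shows "\<bar>hermite k l\<bar> / fact k \<le> 8 * exp (r\<^sup>2 + l\<^sup>2 / 2) / (sqrt r * r ^ k)"
proof -
  define E where "E = exp (r\<^sup>2 + l\<^sup>2 / 2)"
  have "\<bar>hermite k l\<bar> = norm ((deriv ^^ k) (\<lambda>z. exp (2 * complex_of_real l * z - z\<^sup>2)) 0)"
    by (simp add: higher_deriv_hermite_generating_0)
  also have "\<dots> \<le> fact k / r ^ k * integral {0..1}
                    (\<lambda>t. norm (exp (2 * complex_of_real l * circlepath 0 r t - (circlepath 0 r t)\<^sup>2)))"
    using r by (intro norm_higher_deriv_le_integral_circlepath holomorphic_intros continuous_intros)
  also have "\<dots> = fact k / r ^ k * (E * integral {0..1}
                    (\<lambda>t. exp (- (2 * r\<^sup>2 * (cos (2 * pi * t) - l / (2 * r))\<^sup>2))))"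
    using r by (simp only: norm_exp_hermite_generating_circlepath E_def integral_mult_right)
  also have "\<dots> \<le> fact k / r ^ k * (E * (8 / sqrt r))"
    using r by (intro mult_left_mono integral_exp_neg_sq_cos_le) (simp_all add: E_def)
  finally show ?thesis
    using r by (simp add: E_def field_simps)
qed

section \<open>A Stirling-type bound\<close>

lemma ln_one_plus_ge:
  fixes y :: real
  assumes "0 \<le> y"
  shows "2 * y / (2 + y) \<le> ln (1 + y)"
proof -
  have "(\<lambda>t. ln (1 + t) - 2 * t / (2 + t)) 0 \<le> (\<lambda>t. ln (1 + t) - 2 * t / (2 + t)) y"
  proof (rule DERIV_nonneg_imp_nondecreasing[OF assms])
    fix t :: real
    assume t: "0 \<le> t" "t \<le> y"
    have "4 * (1 + t) \<le> (2 + t)\<^sup>2"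
      by (simp add: power2_eq_square algebra_simps)
    then have "4 / (2 + t)\<^sup>2 \<le> 1 / (1 + t)"
      using t by (simp add: field_simps)
    moreover have "((\<lambda>t. ln (1 + t) - 2 * t / (2 + t)) has_real_derivative 1 / (1 + t) - 4 / (2 + t)\<^sup>2) (at t)"
      using t by (auto intro!: derivative_eq_intros simp: field_simps power2_eq_square)
    ultimately show "\<exists>d. ((\<lambda>t. ln (1 + t) - 2 * t / (2 + t)) has_real_derivative d) (at t) \<and> 0 \<le> d"
      by auto
  qed
  then show ?thesis
    by simp
qed

lemma exp_2_le_one_plus_inverse_power:
  assumes "k \<ge> 1"
  shows "exp 2 \<le> (1 + 1 / real k) ^ (2 * k + 1)"
proof -
  have k: "real k > 0"
    using assms by simp
  have "2 = real (2 * k + 1) * (2 * (1 / real k) / (2 + 1 / real k))"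
    using k by (simp add: field_simps)
  also have "\<dots> \<le> real (2 * k + 1) * ln (1 + 1 / real k)"
    by (intro mult_left_mono ln_one_plus_ge) auto
  finally have "exp 2 \<le> exp (real (2 * k + 1) * ln (1 + 1 / real k))"
    by simp
  also have "\<dots> = (1 + 1 / real k) ^ (2 * k + 1)"
    using k by (subst exp_of_nat_mult) (simp add: add_pos_nonneg)
  finally show ?thesis .
qed

lemma sq_fact_mult_exp_le:
  assumes "k \<ge> 1"
  shows "(fact k * exp (real k))\<^sup>2 \<le> exp 2 * real k * real k ^ (2 * k)"
  using assms
proof (induction k rule: dec_induct)
  case base
  then show ?case
    by (simp add: power2_eq_square exp_add[symmetric])
next
  case (step k)
  have "exp 2 * real k ^ (2 * k + 1) \<le> ((1 + 1 / real k) ^ (2 * k + 1)) * real k ^ (2 * k + 1)"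
    by (intro mult_right_mono exp_2_le_one_plus_inverse_power step.hyps) simp
  also have "\<dots> = real (Suc k) ^ (2 * k + 1)"
    using step.hyps by (simp add: power_mult_distrib[symmetric] field_simps)
  finally have growth: "exp 2 * real k ^ (2 * k + 1) \<le> real (Suc k) ^ (2 * k + 1)" .
  have "(fact (Suc k) * exp (real (Suc k)))\<^sup>2 = (real (Suc k))\<^sup>2 * exp 2 * (fact k * exp (real k))\<^sup>2"
    by (simp add: power2_eq_square algebra_simps exp_add[symmetric])
  also have "\<dots> \<le> (real (Suc k))\<^sup>2 * exp 2 * (exp 2 * real k ^ (2 * k + 1))"
    using step.IH by (intro mult_left_mono) (auto simp: power_add)
  also have "\<dots> \<le> (real (Suc k))\<^sup>2 * exp 2 * real (Suc k) ^ (2 * k + 1)"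
    using growth by (intro mult_left_mono) auto
  also have "\<dots> = exp 2 * real (Suc k) * real (Suc k) ^ (2 * Suc k)"
    by (simp add: power2_eq_square algebra_simps)
  finally show ?case .
qed

lemma fact_mult_exp_le:
  assumes "k \<ge> 1"
  shows "fact k * exp (real k) \<le> 2 * sqrt (2 * real k) * real k ^ k"
proof (rule power2_le_imp_le)
  have "exp (2::real) = exp 1 * exp 1"
    by (simp flip: exp_add)
  also have "\<dots> \<le> 272 / 100 * (272 / 100)"
    using e_less_272 by (intro mult_mono) auto
  also have "\<dots> \<le> 8"
    by simp
  finally have "exp (2::real) \<le> 8" .
  then have "(fact k * exp (real k))\<^sup>2 \<le> 8 * real k * real k ^ (2 * k)"
    by (intro order_trans[OF sq_fact_mult_exp_le[OF assms]] mult_right_mono) auto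
  also have "\<dots> = (2 * sqrt (2 * real k) * real k ^ k)\<^sup>2"
    by (simp add: power_mult_distrib power_mult[symmetric] mult.commute)
  finally show "(fact k * exp (real k))\<^sup>2 \<le> (2 * sqrt (2 * real k) * real k ^ k)\<^sup>2" .
qed simp

lemma exp_sq_div_sqrt_mult_power_le:
  assumes k: "k \<ge> 1" and r_def: "r = sqrt (real k / 2)"
  shows "8 * exp (r\<^sup>2) / (sqrt r * r ^ k) \<le> 16 * sqrt (2 ^ k / fact k)"
proof -
  have r: "r > 0" and r2: "real k = 2 * r\<^sup>2"
    using k by (simp_all add: r_def)
  have "sqrt (2 * real k) = sqrt ((2 * r)\<^sup>2)"
    by (simp add: r2 power2_eq_square)
  also have "\<dots> = \<bar>2 * r\<bar>"
    by (rule real_sqrt_abs)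
  also have "\<dots> = 2 * r"
    using r by simp
  finally have "sqrt (2 * real k) = 2 * r" .
  moreover have "exp (real k) = (exp (r\<^sup>2))\<^sup>2"
    by (simp add: r2 exp_double)
  ultimately have "fact k * (exp (r\<^sup>2))\<^sup>2 \<le> 4 * r * (2 * r\<^sup>2) ^ k"
    using fact_mult_exp_le[OF k] by (simp add: r2)
  then have "(8 * exp (r\<^sup>2) / (sqrt r * r ^ k))\<^sup>2 \<le> 256 * (2 ^ k / fact k)"
    using r by (simp add: power_divide power_mult_distrib power_mult[symmetric] field_simps)
  then have "8 * exp (r\<^sup>2) / (sqrt r * r ^ k) \<le> sqrt (256 * (2 ^ k / fact k))"
    by (rule real_le_rsqrt)
  also have "\<dots> = 16 * sqrt (2 ^ k / fact k)"
  proof -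
    have "sqrt (256::real) = 16"
      by (rule real_sqrt_unique) auto
    then show ?thesis
      by (simp only: real_sqrt_mult)
  qed
  finally show ?thesis .
qed

lemma hermite_term_le:
  fixes x l :: real
  assumes x: "x \<ge> 0"
  shows "\<bar>hermite k l\<bar> / fact k * x ^ k \<le> 16 * exp (l\<^sup>2 / 2) * sqrt ((2 * x\<^sup>2) ^ k / fact k)"
proof (cases "k = 0")
  case True
  have "1 \<le> exp (l\<^sup>2 / 2)"
    by simp
  then have "1 \<le> 16 * exp (l\<^sup>2 / 2)"
    by linarith
  then show ?thesis
    using True by (simp add: hermite_eq_poly)
next
  case False
  then have k: "k \<ge> 1"
    by simp
  \<comment> \<open>This radius minimises exp(r^2) / r^k.\<close>
  define r where "r = sqrt (real k / 2)"
  have r: "r > 0"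
    using k by (simp add: r_def)
  note key = exp_sq_div_sqrt_mult_power_le[OF k r_def]
  have "\<bar>hermite k l\<bar> / fact k * x ^ k \<le> 8 * exp (r\<^sup>2 + l\<^sup>2 / 2) / (sqrt r * r ^ k) * x ^ k"
    using abs_hermite_div_fact_le[OF r] x by (intro mult_right_mono) auto
  also have "\<dots> = exp (l\<^sup>2 / 2) * x ^ k * (8 * exp (r\<^sup>2) / (sqrt r * r ^ k))"
    by (simp add: exp_add)
  also have "\<dots> \<le> exp (l\<^sup>2 / 2) * x ^ k * (16 * sqrt (2 ^ k / fact k))"
    using key x by (intro mult_left_mono) auto
  also have "\<dots> = 16 * exp (l\<^sup>2 / 2) * sqrt ((2 * x\<^sup>2) ^ k / fact k)"
    using x by (simp add: real_sqrt_mult real_sqrt_divide real_sqrt_power power_mult_distrib)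
  finally show ?thesis .
qed

section \<open>Square roots of the Poisson weights\<close>

lemma arctan_step_ge:
  fixes s u :: real
  assumes s: "s \<ge> 1"
  shows "1 / (3 * (1 + (u / s)\<^sup>2)) \<le> s * (arctan ((u + 1) / s) - arctan (u / s))"
proof -
  have "u / s < (u + 1) / s"
    using s by (simp add: divide_strict_right_mono)
  then obtain z where z: "u / s < z" "z < (u + 1) / s"
    and mvt: "arctan ((u + 1) / s) - arctan (u / s) = ((u + 1) / s - u / s) * inverse (1 + z\<^sup>2)"
    using MVT2[of "u / s" "(u + 1) / s" arctan "\<lambda>x. inverse (1 + x\<^sup>2)"] by (auto intro: DERIV_arctan)
  have step: "(u + 1) / s - u / s = 1 / s"
    by (simp add: diff_divide_distrib[symmetric])
  moreover have "1 / s \<le> 1"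
    using s by simp
  ultimately have "0 \<le> z - u / s" "z - u / s \<le> 1"
    using z by linarith+
  then have "(z - u / s)\<^sup>2 \<le> 1"
    by (simp add: power_le_one)
  moreover have "z\<^sup>2 \<le> 2 * (u / s)\<^sup>2 + 2 * (z - u / s)\<^sup>2"
    using zero_le_power2[of "u / s - (z - u / s)"] by (simp add: power2_eq_square algebra_simps)
  ultimately have "z\<^sup>2 \<le> 2 * (u / s)\<^sup>2 + 2"
    by linarith
  then have "1 + z\<^sup>2 \<le> 3 + 2 * (u / s)\<^sup>2"
    by simp
  also have "\<dots> \<le> 3 * (1 + (u / s)\<^sup>2)"
    by simp
  finally have "1 + z\<^sup>2 \<le> 3 * (1 + (u / s)\<^sup>2)" .
  then have "1 / (3 * (1 + (u / s)\<^sup>2)) \<le> 1 / (1 + z\<^sup>2)"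
    by (intro divide_left_mono) (auto intro!: add_pos_nonneg mult_pos_pos)
  also have "\<dots> = s * (1 / s * inverse (1 + z\<^sup>2))"
    using s by (simp add: divide_inverse)
  also have "\<dots> = s * (arctan ((u + 1) / s) - arctan (u / s))"
    by (simp only: mvt step)
  finally show ?thesis .
qed

lemma sum_inverse_one_plus_square_le:
  fixes s m :: real
  assumes s: "s \<ge> 1"
  shows "(\<Sum>k<N. 1 / (1 + ((real k - m) / s)\<^sup>2)) \<le> 3 * pi * s"
proof -
  define f where "f k = arctan ((real k - m) / s)" for k :: nat
  have "1 / (1 + ((real k - m) / s)\<^sup>2) \<le> 3 * s * (f (Suc k) - f k)" for k
  proof -
    have step: "1 / (3 * (1 + ((real k - m) / s)\<^sup>2)) \<le> s * (f (Suc k) - f k)"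
      using arctan_step_ge[OF s, of "real k - m"] by (simp add: f_def algebra_simps)
    have "3 * (1 / (3 * y)) = 1 / y" for y :: real
      by simp
    then have "1 / (1 + ((real k - m) / s)\<^sup>2) = 3 * (1 / (3 * (1 + ((real k - m) / s)\<^sup>2)))"
      by (rule sym)
    also have "\<dots> \<le> 3 * (s * (f (Suc k) - f k))"
      using step by (rule mult_left_mono) simp
    finally show ?thesis
      by (simp only: mult.assoc)
  qed
  then have "(\<Sum>k<N. 1 / (1 + ((real k - m) / s)\<^sup>2)) \<le> (\<Sum>k<N. 3 * s * (f (Suc k) - f k))"
    by (intro sum_mono)
  also have "\<dots> = 3 * s * (f N - f 0)"
    by (simp only: sum_distrib_left[symmetric] sum_lessThan_telescope)
  also have "\<dots> \<le> 3 * s * pi"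
    using arctan_bounded[of "(real N - m) / s"] arctan_bounded[of "(real 0 - m) / s"] s
    by (intro mult_left_mono) (auto simp: f_def)
  finally show ?thesis
    by (simp add: mult_ac)
qed

lemma sums_power_div_fact: "(\<lambda>k. m ^ k / fact k) sums exp (m :: real)"
  using exp_converges[of m] by (simp add: divide_inverse mult.commute)

lemma sums_of_nat_mult_power_div_fact:
  "(\<lambda>k. real k * (m ^ k / fact k)) sums (m * exp (m :: real))"
proof -
  have "(\<lambda>k. real (Suc k) * (m ^ Suc k / fact (Suc k))) sums (m * exp m)"
    using sums_mult[OF sums_power_div_fact, of m m] by (simp add: field_simps del: of_nat_Suc)
  then show ?thesis
    by (subst (asm) sums_Suc_iff) simp
qed

lemma sums_poisson_variance:
  "(\<lambda>k. m ^ k / fact k * (real k - m)\<^sup>2) sums (m * exp (m :: real))"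
proof -
  have shift: "real (Suc k) * (real (Suc k) - 1) * (m ^ Suc k / fact (Suc k)) = m * (real k * (m ^ k / fact k))" for k
  proof -
    have "real (Suc k) * (real (Suc k) - 1) * (m ^ Suc k / fact (Suc k))
            = real k * (real (Suc k) * (m ^ Suc k / fact (Suc k)))"
      by (simp add: algebra_simps)
    also have "real (Suc k) * (m ^ Suc k / fact (Suc k)) = m * (m ^ k / fact k)"
      by (simp add: field_simps del: of_nat_Suc)
    finally show ?thesis
      by (simp only: mult_ac)
  qed
  have "(\<lambda>k. real (Suc k) * (real (Suc k) - 1) * (m ^ Suc k / fact (Suc k))) sums (m * (m * exp m))"
    unfolding shift by (rule sums_mult[OF sums_of_nat_mult_power_div_fact])
  then have second: "(\<lambda>k. real k * (real k - 1) * (m ^ k / fact k)) sums (m * (m * exp m))"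
    by (subst (asm) sums_Suc_iff) simp
  have "(\<lambda>k. real k * (real k - 1) * (m ^ k / fact k) + (1 - 2 * m) * (real k * (m ^ k / fact k))
             + m\<^sup>2 * (m ^ k / fact k))
          sums (m * (m * exp m) + (1 - 2 * m) * (m * exp m) + m\<^sup>2 * exp m)"
    by (intro sums_add sums_mult second sums_of_nat_mult_power_div_fact sums_power_div_fact)
  moreover have identity: "real k * (real k - 1) * p + (1 - 2 * m) * (real k * p) + m\<^sup>2 * p = p * (real k - m)\<^sup>2"
    for k and p :: real
    by (simp add: power2_eq_square algebra_simps)
  moreover have "m * (m * exp m) + (1 - 2 * m) * (m * exp m) + m\<^sup>2 * exp m = m * exp m"
    by (simp add: power2_eq_square algebra_simps)
  ultimately show ?thesis
    by (simp only: identity)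
qed

lemma sum_poisson_weighted_le:
  fixes m :: real
  assumes m: "m \<ge> 0"
  shows "(\<Sum>k<N. m ^ k / fact k * (1 + (real k - m)\<^sup>2 / (m + 1))) \<le> 2 * exp m"
proof -
  have "(\<lambda>k. m ^ k / fact k + m ^ k / fact k * (real k - m)\<^sup>2 / (m + 1)) sums (exp m + m * exp m / (m + 1))"
    by (intro sums_add sums_power_div_fact sums_divide sums_poisson_variance)
  then have sums: "(\<lambda>k. m ^ k / fact k * (1 + (real k - m)\<^sup>2 / (m + 1))) sums (exp m + m * exp m / (m + 1))"
    by (simp only: distrib_left mult_1_right times_divide_eq_right)
  have "(\<Sum>k<N. m ^ k / fact k * (1 + (real k - m)\<^sup>2 / (m + 1))) \<le> exp m + m * exp m / (m + 1)"
    using sums m by (intro sum_le_suminf[THEN order_trans]) (auto simp: sums_iff)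
  also have "\<dots> \<le> 2 * exp m"
    using m by (simp add: field_simps)
  finally show ?thesis .
qed

lemma sum_sqrt_power_div_fact_le:
  fixes m :: real
  assumes m: "m \<ge> 0"
  shows "(\<Sum>k<N. sqrt (m ^ k / fact k)) \<le> sqrt (6 * pi * sqrt (m + 1) * exp m)"
proof -
  define s where "s = sqrt (m + 1)"
  have s: "s \<ge> 1" and s2: "s\<^sup>2 = m + 1"
    using m by (simp_all add: s_def)
  define p where "p k = m ^ k / fact k" for k :: nat
  define w where "w k = 1 + ((real k - m) / s)\<^sup>2" for k :: nat
  have p: "p k \<ge> 0" and w: "w k > 0" for k
    using m by (auto simp: p_def w_def intro: add_pos_nonneg)
  \<comment> \<open>Cauchy-Schwarz against the weights w: the sum of p * w is a Poisson variance,
    and the sum of 1 / w telescopes against arctan.\<close>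
  have "sqrt (p k * w k) * sqrt (1 / w k) = sqrt (p k)" for k
    using w[of k] by (simp add: real_sqrt_mult[symmetric])
  then have "(\<Sum>k<N. sqrt (p k))\<^sup>2 = (\<Sum>k<N. sqrt (p k * w k) * sqrt (1 / w k))\<^sup>2"
    by simp
  also have "\<dots> \<le> (\<Sum>k<N. (sqrt (p k * w k))\<^sup>2) * (\<Sum>k<N. (sqrt (1 / w k))\<^sup>2)"
    by (rule Cauchy_Schwarz_ineq_sum)
  also have "\<dots> = (\<Sum>k<N. p k * w k) * (\<Sum>k<N. 1 / w k)"
    using p w by (simp add: less_imp_le)
  also have "\<dots> \<le> (2 * exp m) * (3 * (pi * s))"
  proof (rule mult_mono)
    show "(\<Sum>k<N. p k * w k) \<le> 2 * exp m"
      using sum_poisson_weighted_le[OF m, of N] s2 by (simp add: p_def w_def power_divide)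
    show "(\<Sum>k<N. 1 / w k) \<le> 3 * (pi * s)"
      using sum_inverse_one_plus_square_le[OF s, where N = N and m = m] by (simp add: w_def mult_ac)
  qed (use w in \<open>auto intro!: sum_nonneg simp: less_imp_le\<close>)
  finally show ?thesis
    by (intro real_le_rsqrt) (simp add: p_def s_def mult_ac)
qed

lemma sum_abs_hermite_power_le:
  fixes x l :: real
  assumes x: "x \<ge> 0"
  shows "(\<Sum>k<N. \<bar>hermite k l\<bar> / fact k * x ^ k) \<le> 112 * sqrt (1 + x) * exp (x\<^sup>2 + l\<^sup>2 / 2)"
proof -
  have "sqrt (2 * x\<^sup>2 + 1) \<le> 2 * (1 + x)"
    using x by (intro real_le_lsqrt) (simp_all add: power2_eq_square algebra_simps)
  then have "6 * pi * sqrt (2 * x\<^sup>2 + 1) \<le> 6 * 4 * (2 * (1 + x))"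
    using pi_less_4 by (intro mult_mono) auto
  then have "6 * pi * sqrt (2 * x\<^sup>2 + 1) * exp (2 * x\<^sup>2) \<le> 49 * (1 + x) * exp (2 * x\<^sup>2)"
    using x by (intro mult_right_mono) auto
  then have "sqrt (6 * pi * sqrt (2 * x\<^sup>2 + 1) * exp (2 * x\<^sup>2)) \<le> sqrt (7\<^sup>2 * (1 + x) * (exp (x\<^sup>2))\<^sup>2)"
    by (intro real_sqrt_le_mono) (simp add: exp_double)
  also have "\<dots> = 7 * sqrt (1 + x) * exp (x\<^sup>2)"
    by (simp only: real_sqrt_mult real_sqrt_abs) simp
  finally have numeric: "sqrt (6 * pi * sqrt (2 * x\<^sup>2 + 1) * exp (2 * x\<^sup>2)) \<le> 7 * sqrt (1 + x) * exp (x\<^sup>2)" .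
  have "(\<Sum>k<N. \<bar>hermite k l\<bar> / fact k * x ^ k) \<le> (\<Sum>k<N. 16 * exp (l\<^sup>2 / 2) * sqrt ((2 * x\<^sup>2) ^ k / fact k))"
    using x by (intro sum_mono hermite_term_le)
  also have "\<dots> = 16 * exp (l\<^sup>2 / 2) * (\<Sum>k<N. sqrt ((2 * x\<^sup>2) ^ k / fact k))"
    by (simp add: sum_distrib_left)
  also have "\<dots> \<le> 16 * exp (l\<^sup>2 / 2) * sqrt (6 * pi * sqrt (2 * x\<^sup>2 + 1) * exp (2 * x\<^sup>2))"
    by (intro mult_left_mono sum_sqrt_power_div_fact_le) auto
  also have "\<dots> \<le> 16 * exp (l\<^sup>2 / 2) * (7 * sqrt (1 + x) * exp (x\<^sup>2))"
    using numeric by (intro mult_left_mono) auto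
  also have "\<dots> = 112 * sqrt (1 + x) * exp (x\<^sup>2 + l\<^sup>2 / 2)"
    by (simp add: exp_add)
  finally show ?thesis .
qed

theorem lemma8:
  shows "\<exists>C>0. \<forall>(l::real) (x::real). x \<ge> 0 \<longrightarrow>
           summable (\<lambda>k. \<bar>hermite k l\<bar> / fact k * x ^ k) \<and>
           (\<Sum>k. \<bar>hermite k l\<bar> / fact k * x ^ k)
             \<le> C * sqrt (1 + x) * exp (x\<^sup>2 + l\<^sup>2 / 2)"
proof (intro exI[of _ 112] conjI allI impI)
  fix l x :: real
  assume x: "x \<ge> 0"
  have nonneg: "0 \<le> \<bar>hermite k l\<bar> / fact k * x ^ k" for k
    using x by simp
  have partial: "(\<Sum>k<N. \<bar>hermite k l\<bar> / fact k * x ^ k) \<le> 112 * sqrt (1 + x) * exp (x\<^sup>2 + l\<^sup>2 / 2)" for N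
    using sum_abs_hermite_power_le[OF x] .
  show summable: "summable (\<lambda>k. \<bar>hermite k l\<bar> / fact k * x ^ k)"
  proof (rule bounded_imp_summable[OF nonneg])
    show "(\<Sum>k\<le>n. \<bar>hermite k l\<bar> / fact k * x ^ k) \<le> 112 * sqrt (1 + x) * exp (x\<^sup>2 + l\<^sup>2 / 2)" for n
      using partial[of "Suc n"] by (simp add: lessThan_Suc_atMost)
  qed
  show "(\<Sum>k. \<bar>hermite k l\<bar> / fact k * x ^ k) \<le> 112 * sqrt (1 + x) * exp (x\<^sup>2 + l\<^sup>2 / 2)"
    using summable partial by (rule suminf_le_const)
qed simp

end
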